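(* Assume properties (P.4), (P.5) and (P.6) hold. Let $N\in\mathbb N$ and let $\Omega\in\mathscr A$ be an $N$-admissible set with $\mathfrak m(\Omega)\in(0,+\infty)$. Then $\Omega$ has an $N$-Cheeger set, i.e. $\mathscr C_N(\Omega)\neq\emptyset$.
   Context: $(X,\mathscr A,\mathfrak m)$ is a non-negative $\sigma$-finite measure space. For $A,B\in\mathscr A$, "$A\subset B$" means $\mathfrak m(A\setminus B)=0$. $P\colon\mathscr A\to[0,+\infty]$ is a proper functional (i.e. $P(A)<+\infty$ for some $A\in\mathscr A$), called the perimeter. Convergence of sets in $L^1(X,\mathfrak m)$ means $L^1$ convergence of their characteristic functions. Properties: (P.4) $P$ is lower semicontinuous with respect to $L^1(X,\mathfrak m)$ convergence: if $\chi_{E_k}\to\chi_E$ in $L^1(X,\mathfrak m)$ then $P(E)\le\liminf_k P(E_k)$. (P.5) For every $c\ge0$, the set $\{\chi_E: E\in\mathscr A,\ P(E)\le c\}$ is compact in $L^1(X,\mathfrak m)$. (P.6) There is a function $f\colon(0,+\infty)\to(0,+\infty)$ with $\lim_{\varepsilon\to0^+}f(\varepsilon)=+\infty$ such that, whenever $\varepsilon>0$ and $E\in\mathscr A$ with $\mathfrak m(E)\le\varepsilon$, one has $P(E)\ge f(\varepsilon)\,\mathfrak m(E)$. Clusters: for $N\in\mathbb N$, an $N$-cluster is a family $\mathcal E=\{\mathcal E(i)\}_{i=1}^N\subset\mathscr A$ with $0<\mathfrak m(\mathcal E(i))<+\infty$ and $P(\mathcal E(i))<+\infty$ for all $i$,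 and $\mathfrak m(\mathcal E(i)\cap\mathcal E(j))=0$ for $i\neq j$. A set $\Omega\in\mathscr A$ is $N$-admissible if there is an $N$-cluster all of whose chambers are contained in $\Omega$. For $N$-admissible $\Omega$, the $N$-Cheeger constant is $h_N(\Omega)=\inf\{\sum_{i=1}^N P(\mathcal E(i))/\mathfrak m(\mathcal E(i)) : \mathcal E \text{ an } N\text{-cluster with all chambers contained in }\Omega\}$; an $N$-cluster in $\Omega$ attaining this infimum is an $N$-Cheeger set of $\Omega$, and $\mathscr C_N(\Omega)$ denotes the collection of all of them. *)

theory Defs
  imports "HOL-Analysis.Analysis"
begin

definition ae_subset :: "'a measure \<Rightarrow> 'a set \<Rightarrow> 'a set \<Rightarrow> bool" where
  "ae_subset M A B \<longleftrightarrow> emeasure M (A - B) = 0"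

text \<open>L1 convergence of characteristic functions: the L1 distance of chi_E and chi_F
  is m(E symmetric-difference F).\<close>
definition L1_conv_sets :: "'a measure \<Rightarrow> (nat \<Rightarrow> 'a set) \<Rightarrow> 'a set \<Rightarrow> bool" where
  "L1_conv_sets M Es E \<longleftrightarrow>
     (\<forall>k. Es k \<in> sets M) \<and> E \<in> sets M \<and>
     ((\<lambda>k. emeasure M ((Es k - E) \<union> (E - Es k))) \<longlonglongrightarrow> 0)"

definition perimeter_lsc :: "'a measure \<Rightarrow> ('a set \<Rightarrow> ennreal) \<Rightarrow> bool" where
  "perimeter_lsc M P \<longleftrightarrow>
     (\<forall>Es E. L1_conv_sets M Es E \<longrightarrow> P E \<le> liminf (\<lambda>k. P (Es k)))"

definition perimeter_compact :: "'a measure \<Rightarrow> ('a set \<Rightarrow> ennreal) \<Rightarrow> bool" where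
  "perimeter_compact M P \<longleftrightarrow>
     (\<forall>c::real. c \<ge> 0 \<longrightarrow>
        (\<forall>Es. (\<forall>k. Es k \<in> sets M \<and> P (Es k) \<le> ennreal c) \<longrightarrow>
           (\<exists>(r::nat \<Rightarrow> nat) E. strict_mono r \<and> E \<in> sets M \<and> P E \<le> ennreal c \<and>
                  L1_conv_sets M (Es \<circ> r) E)))"

definition perimeter_small_sets :: "'a measure \<Rightarrow> ('a set \<Rightarrow> ennreal) \<Rightarrow> bool" where
  "perimeter_small_sets M P \<longleftrightarrow>
     (\<exists>f::real \<Rightarrow> real. (\<forall>\<epsilon>>0. f \<epsilon> > 0) \<and> filterlim f at_top (at_right 0) \<and>
        (\<forall>\<epsilon>>0. \<forall>E\<in>sets M. emeasure M E \<le> ennreal \<epsilon> \<longrightarrow>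
              P E \<ge> ennreal (f \<epsilon>) * emeasure M E))"

definition is_cluster :: "'a measure \<Rightarrow> ('a set \<Rightarrow> ennreal) \<Rightarrow> nat \<Rightarrow> (nat \<Rightarrow> 'a set) \<Rightarrow> bool" where
  "is_cluster M P N E \<longleftrightarrow>
     (\<forall>i\<in>{1..N}. E i \<in> sets M \<and> 0 < emeasure M (E i) \<and> emeasure M (E i) < \<infinity>
                  \<and> P (E i) < \<infinity>) \<and>
     (\<forall>i\<in>{1..N}. \<forall>j\<in>{1..N}. i \<noteq> j \<longrightarrow> emeasure M (E i \<inter> E j) = 0)"

definition cluster_in :: "'a measure \<Rightarrow> ('a set \<Rightarrow> ennreal) \<Rightarrow> nat \<Rightarrow> 'a set \<Rightarrow> (nat \<Rightarrow> 'a set) \<Rightarrow> bool" where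
  "cluster_in M P N \<Omega> E \<longleftrightarrow> is_cluster M P N E \<and> (\<forall>i\<in>{1..N}. ae_subset M (E i) \<Omega>)"

definition admissible :: "'a measure \<Rightarrow> ('a set \<Rightarrow> ennreal) \<Rightarrow> nat \<Rightarrow> 'a set \<Rightarrow> bool" where
  "admissible M P N \<Omega> \<longleftrightarrow> (\<exists>E. cluster_in M P N \<Omega> E)"

text \<open>Sum of P(E i)/m(E i); all quantities are finite reals for a cluster.\<close>
definition cheeger_ratio :: "'a measure \<Rightarrow> ('a set \<Rightarrow> ennreal) \<Rightarrow> nat \<Rightarrow> (nat \<Rightarrow> 'a set) \<Rightarrow> real" where
  "cheeger_ratio M P N E = (\<Sum>i=1..N. enn2real (P (E i)) / measure M (E i))"

definition cheeger_const :: "'a measure \<Rightarrow> ('a set \<Rightarrow> ennreal) \<Rightarrow> nat \<Rightarrow> 'a set \<Rightarrow> real" where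
  "cheeger_const M P N \<Omega> = Inf {cheeger_ratio M P N E | E. cluster_in M P N \<Omega> E}"

definition cheeger_sets :: "'a measure \<Rightarrow> ('a set \<Rightarrow> ennreal) \<Rightarrow> nat \<Rightarrow> 'a set \<Rightarrow> (nat \<Rightarrow> 'a set) set" where
  "cheeger_sets M P N \<Omega> =
     {E. cluster_in M P N \<Omega> E \<and> cheeger_ratio M P N E = cheeger_const M P N \<Omega>}"

end

theory Submission imports Defs begin

text \<open>Take a minimising sequence of clusters. Its ratios are bounded by some C, so by (P.6) every
  chamber has measure at least some \<open>e > 0\<close>, and since all chambers lie in \<Omega>, every perimeter
  is at most \<open>C m(\<Omega>)\<close>. By (P.5) a subsequence converges chamberwise in \<open>L\<^sup>1\<close>; the limit chambers
  still lie in \<Omega>, are pairwise null-intersecting and have measure at least e, so they form a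
  cluster, and by (P.4) its ratio is at most the infimum.\<close>

lemma ennreal_eq_0_if_le_null_seq:
  fixes a :: ennreal
  assumes "\<And>k. a \<le> d k" "d \<longlonglongrightarrow> 0"
  shows "a = 0"
  using LIMSEQ_le_const[OF assms(2)] assms(1) by (metis le_zero_eq)

lemma ae_subset_emeasure_le:
  assumes "ae_subset M A B" "A \<in> sets M" "B \<in> sets M"
  shows "emeasure M A \<le> emeasure M B"
proof -
  have "emeasure M A \<le> emeasure M (B \<union> (A - B))" by (rule emeasure_mono) (use assms in auto)
  also have "\<dots> \<le> emeasure M B + emeasure M (A - B)" using assms by (intro emeasure_subadditive) auto
  finally show ?thesis using assms unfolding ae_subset_def by simp
qed

lemma L1_conv_sets_subseq:
  assumes "L1_conv_sets M Es E" "strict_mono r"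
  shows "L1_conv_sets M (Es \<circ> r) E"
  using assms LIMSEQ_subseq_LIMSEQ[of "\<lambda>k. emeasure M ((Es k - E) \<union> (E - Es k))" 0 r]
  unfolding L1_conv_sets_def by (auto simp: o_def)

lemma L1_conv_sets_diff_tendsto_0:
  assumes "L1_conv_sets M Es E"
  shows "(\<lambda>k. emeasure M (E - Es k)) \<longlonglongrightarrow> 0"
proof (rule tendsto_sandwich[OF _ _ tendsto_const])
  show "(\<lambda>k. emeasure M ((Es k - E) \<union> (E - Es k))) \<longlonglongrightarrow> 0"
    using assms unfolding L1_conv_sets_def by auto
  show "\<forall>\<^sub>F k in sequentially. emeasure M (E - Es k) \<le> emeasure M ((Es k - E) \<union> (E - Es k))"
    using assms unfolding L1_conv_sets_def by (auto intro!: always_eventually emeasure_mono)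
qed simp

lemma L1_conv_sets_measure_tendsto:
  assumes conv: "L1_conv_sets M Es E" and "emeasure M E < \<infinity>" "\<And>k. emeasure M (Es k) < \<infinity>"
  shows "(\<lambda>k. measure M (Es k)) \<longlonglongrightarrow> measure M E"
proof -
  define D where "D k = (Es k - E) \<union> (E - Es k)" for k
  have sets: "Es k \<in> sets M" "E \<in> sets M" "D k \<in> sets M" for k
    using conv unfolding L1_conv_sets_def D_def by auto
  have fin: "emeasure M (D k) < \<infinity>" for k
  proof -
    have "emeasure M (D k) \<le> emeasure M (Es k) + emeasure M E"
      using sets by (intro order_trans[OF emeasure_mono emeasure_subadditive]) (auto simp: D_def)
    also have "\<dots> < \<infinity>" using assms by simp
    finally show ?thesis .
  qed
  have null: "(\<lambda>k. measure M (D k)) \<longlonglongrightarrow> 0"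
    using conv tendsto_enn2real[of _ 0] unfolding L1_conv_sets_def D_def measure_def by force
  have close: "\<bar>measure M (Es k) - measure M E\<bar> \<le> measure M (D k)" for k
  proof -
    have bound: "measure M A \<le> measure M B + measure M (D k)"
      if "A \<subseteq> B \<union> D k" "A \<in> sets M" "B \<in> sets M" "emeasure M B < \<infinity>" for A B
    proof -
      have "emeasure M (B \<union> D k) < \<infinity>"
        using that sets fin by (intro le_less_trans[OF emeasure_subadditive]) auto
      hence "measure M A \<le> measure M (B \<union> D k)"
        using that sets by (intro measure_mono_fmeasurable) (auto simp: fmeasurable_def)
      also have "\<dots> \<le> measure M B + measure M (D k)"
        using that sets fin by (intro measure_subadditive) (auto simp: less_top)
      finally show ?thesis .
    qed
    have "Es k \<subseteq> E \<union> D k" "E \<subseteq> Es k \<union> D k" unfolding D_def by auto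
    hence "measure M (Es k) \<le> measure M E + measure M (D k)"
      "measure M E \<le> measure M (Es k) + measure M (D k)"
      using bound sets assms by blast+
    thus ?thesis by (simp add: abs_le_iff)
  qed
  have "(\<lambda>k. measure M (Es k) - measure M E) \<longlonglongrightarrow> 0"
    using close by (intro Lim_null_comparison[OF always_eventually null]) simp
  thus ?thesis by (simp add: LIM_zero_iff)
qed

lemma L1_conv_sets_ae_subset:
  assumes conv: "L1_conv_sets M Es E" and "\<Omega> \<in> sets M" "\<And>k. ae_subset M (Es k) \<Omega>"
  shows "ae_subset M E \<Omega>"
  unfolding ae_subset_def
proof (rule ennreal_eq_0_if_le_null_seq[OF _ L1_conv_sets_diff_tendsto_0[OF conv]])
  fix k
  have sets: "Es k \<in> sets M" "E \<in> sets M" using conv unfolding L1_conv_sets_def by auto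
  have "emeasure M (E - \<Omega>) \<le> emeasure M ((Es k - \<Omega>) \<union> (E - Es k))"
    using sets assms by (intro emeasure_mono) auto
  also have "\<dots> \<le> emeasure M (Es k - \<Omega>) + emeasure M (E - Es k)"
    using sets assms by (intro emeasure_subadditive) auto
  finally show "emeasure M (E - \<Omega>) \<le> emeasure M (E - Es k)"
    using assms(3) unfolding ae_subset_def by simp
qed

lemma L1_conv_sets_null_inter:
  assumes conv: "L1_conv_sets M Es E" "L1_conv_sets M Fs F"
    and null: "\<And>k. emeasure M (Es k \<inter> Fs k) = 0"
  shows "emeasure M (E \<inter> F) = 0"
proof (rule ennreal_eq_0_if_le_null_seq)
  show "(\<lambda>k. emeasure M (E - Es k) + emeasure M (F - Fs k)) \<longlonglongrightarrow> 0"
    using tendsto_add[OF conv[THEN L1_conv_sets_diff_tendsto_0]] by simp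
  fix k
  have sets: "Es k \<in> sets M" "E \<in> sets M" "Fs k \<in> sets M" "F \<in> sets M"
    using conv unfolding L1_conv_sets_def by auto
  have "emeasure M (E \<inter> F) \<le> emeasure M ((Es k \<inter> Fs k) \<union> ((E - Es k) \<union> (F - Fs k)))"
    using sets by (intro emeasure_mono) auto
  also have "\<dots> \<le> emeasure M (Es k \<inter> Fs k) + (emeasure M (E - Es k) + emeasure M (F - Fs k))"
    using sets by (intro order_trans[OF emeasure_subadditive] add_left_mono emeasure_subadditive) auto
  finally show "emeasure M (E \<inter> F) \<le> emeasure M (E - Es k) + emeasure M (F - Fs k)"
    using null by simp
qed

lemma perimeter_compact_convergent_subseq:
  fixes F :: "nat \<Rightarrow> 'a set"
  assumes comp: "perimeter_compact M P" and c: "c \<ge> 0"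
    and F: "\<And>k. F k \<in> sets M \<and> P (F k) \<le> ennreal c"
  obtains r E l where "strict_mono r" "E \<in> sets M" "P E \<le> ennreal c" "L1_conv_sets M (F \<circ> r) E"
    "(\<lambda>k. enn2real (P (F (r k)))) \<longlonglongrightarrow> l"
proof -
  obtain r1 E where r1: "strict_mono r1" "E \<in> sets M" "P E \<le> ennreal c" "L1_conv_sets M (F \<circ> r1) E"
    using comp[unfolded perimeter_compact_def, rule_format, of c F, OF c F] by blast
  have "bounded (range (\<lambda>k. enn2real (P (F (r1 k)))))"
    unfolding bounded_iff using c F by (auto intro!: exI[of _ c] enn2real_leI)
  then obtain l r2 where r2: "strict_mono (r2 :: nat \<Rightarrow> nat)"
      "((\<lambda>k. enn2real (P (F (r1 k)))) \<circ> r2) \<longlonglongrightarrow> l"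
    using bounded_imp_convergent_subsequence by blast
  have "L1_conv_sets M (F \<circ> (r1 \<circ> r2)) E"
    using L1_conv_sets_subseq[OF r1(4) r2(1)] by (simp add: o_assoc)
  with strict_mono_o[OF r1(1) r2(1)] r1(2,3) r2(2) show ?thesis
    by (intro that) (simp_all add: o_def)
qed

lemma perimeter_compact_common_subseq:
  fixes F :: "nat \<Rightarrow> nat \<Rightarrow> 'a set" and c :: real
  assumes comp: "perimeter_compact M P" and c: "c \<ge> 0"
  shows "(\<And>k i. i \<in> {1..n} \<Longrightarrow> F k i \<in> sets M \<and> P (F k i) \<le> ennreal c) \<Longrightarrow>
    \<exists>r E p. strict_mono r \<and> (\<forall>i\<in>{1..n}. E i \<in> sets M \<and> P (E i) \<le> ennreal c \<and>
      L1_conv_sets M (\<lambda>k. F (r k) i) (E i) \<and> (\<lambda>k. enn2real (P (F (r k) i))) \<longlonglongrightarrow> p i)"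
proof (induction n)
  case 0
  show ?case by (rule exI[of _ id]) (auto simp: strict_mono_def)
next
  case (Suc n)
  have "\<And>k i. i \<in> {1..n} \<Longrightarrow> F k i \<in> sets M \<and> P (F k i) \<le> ennreal c"
    using Suc.prems by simp
  from Suc.IH[OF this] obtain r E p where r: "strict_mono r"
    and H: "\<forall>i\<in>{1..n}. E i \<in> sets M \<and> P (E i) \<le> ennreal c \<and>
      L1_conv_sets M (\<lambda>k. F (r k) i) (E i) \<and> (\<lambda>k. enn2real (P (F (r k) i))) \<longlonglongrightarrow> p i"
    by blast
  have "\<And>k. F (r k) (Suc n) \<in> sets M \<and> P (F (r k) (Suc n)) \<le> ennreal c"
    using Suc.prems by simp
  from perimeter_compact_convergent_subseq[where F = "\<lambda>k. F (r k) (Suc n)", OF comp c this]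
  obtain r' E' l where r': "strict_mono r'" "E' \<in> sets M" "P E' \<le> ennreal c"
    "L1_conv_sets M (\<lambda>k. F (r (r' k)) (Suc n)) E'" "(\<lambda>k. enn2real (P (F (r (r' k)) (Suc n)))) \<longlonglongrightarrow> l"
    by (auto simp: o_def)
  show ?case
  proof (intro exI[of _ "r \<circ> r'"] exI[of _ "E(Suc n := E')"] exI[of _ "p(Suc n := l)"] conjI ballI)
    show "strict_mono (r \<circ> r')" using r r' by (intro strict_mono_o)
    fix i assume i: "i \<in> {1..Suc n}"
    show "(E(Suc n := E')) i \<in> sets M" "P ((E(Suc n := E')) i) \<le> ennreal c"
      using i H r' by (cases "i = Suc n"; simp)+
    show "L1_conv_sets M (\<lambda>k. F ((r \<circ> r') k) i) ((E(Suc n := E')) i)"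
    proof (cases "i = Suc n")
      case False
      with i H have "L1_conv_sets M (\<lambda>k. F (r k) i) (E i)" by simp
      from L1_conv_sets_subseq[OF this r'(1)] False show ?thesis by (simp add: o_def)
    qed (use r' in simp)
    show "(\<lambda>k. enn2real (P (F ((r \<circ> r') k) i))) \<longlonglongrightarrow> (p(Suc n := l)) i"
    proof (cases "i = Suc n")
      case False
      with i H have "(\<lambda>k. enn2real (P (F (r k) i))) \<longlonglongrightarrow> p i" by simp
      from LIMSEQ_subseq_LIMSEQ[OF this r'(1)] False show ?thesis by (simp add: o_def)
    qed (use r' in simp)
  qed
qed

lemma perimeter_small_sets_measure_lower_bound:
  assumes "perimeter_small_sets M P"
  obtains e where "e > 0" "\<And>E. E \<in> sets M \<Longrightarrow> 0 < emeasure M E \<Longrightarrow> emeasure M E < \<infinity> \<Longrightarrow>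
      P E < \<infinity> \<Longrightarrow> enn2real (P E) / measure M E \<le> C \<Longrightarrow> e < measure M E"
proof -
  obtain f :: "real \<Rightarrow> real" where fpos: "\<forall>\<epsilon>>0. f \<epsilon> > 0" and flim: "filterlim f at_top (at_right 0)"
    and fP: "\<forall>\<epsilon>>0. \<forall>E\<in>sets M. emeasure M E \<le> ennreal \<epsilon> \<longrightarrow> P E \<ge> ennreal (f \<epsilon>) * emeasure M E"
    using assms unfolding perimeter_small_sets_def by blast
  have "eventually (\<lambda>x. C < f x) (at_right 0)" using flim filterlim_at_top_dense by blast
  then obtain b :: real where b: "b > 0" "\<forall>y>0. y < b \<longrightarrow> C < f y"
    unfolding eventually_at_right_field by blast
  define e where "e = b / 2"
  have e: "e > 0" "C < f e" "0 \<le> f e" using b fpos unfolding e_def by (auto simp: less_imp_le)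
  have "e < measure M E" if E: "E \<in> sets M" "0 < emeasure M E" "emeasure M E < \<infinity>" "P E < \<infinity>"
      "enn2real (P E) / measure M E \<le> C" for E
  proof (rule ccontr)
    have em: "emeasure M E = ennreal (measure M E)" using E by (simp add: emeasure_eq_ennreal_measure)
    have mpos: "measure M E > 0" using E(2) em by simp
    assume "\<not> e < measure M E"
    hence "emeasure M E \<le> ennreal e" using em by (simp add: ennreal_leI)
    hence "ennreal (f e * measure M E) \<le> P E"
      using fP[rule_format, OF e(1) E(1)] e em by (simp add: ennreal_mult)
    from enn2real_mono[OF this] have "f e * measure M E \<le> enn2real (P E)"
      using E(4) e(3) by simp
    hence "f e \<le> enn2real (P E) / measure M E" using mpos by (simp add: pos_le_divide_eq)
    thus False using E(5) e by linarith
  qed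
  with e(1) show ?thesis by (rule that)
qed

lemma cheeger_ratio_nonneg: "cheeger_ratio M P N E \<ge> 0"
  unfolding cheeger_ratio_def by (intro sum_nonneg divide_nonneg_nonneg) auto

lemma cheeger_ratio_chamber_le:
  "i \<in> {1..N} \<Longrightarrow> enn2real (P (E i)) / measure M (E i) \<le> cheeger_ratio M P N E"
  unfolding cheeger_ratio_def
  by (rule member_le_sum[where f = "\<lambda>i. enn2real (P (E i)) / measure M (E i)"]) simp_all

lemma cheeger_const_le:
  assumes "cluster_in M P N \<Omega> E"
  shows "cheeger_const M P N \<Omega> \<le> cheeger_ratio M P N E"
  unfolding cheeger_const_def using assms
  by (intro cInf_lower) (auto intro!: bdd_belowI[of _ 0] cheeger_ratio_nonneg)

lemma cheeger_minimizing_sequence: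
  assumes "admissible M P N \<Omega>"
  obtains Es where "\<And>k. cluster_in M P N \<Omega> (Es k)"
    "\<And>k. cheeger_ratio M P N (Es k) \<le> cheeger_const M P N \<Omega> + 1"
    "(\<lambda>k. cheeger_ratio M P N (Es k)) \<longlonglongrightarrow> cheeger_const M P N \<Omega>"
proof -
  define h where "h = cheeger_const M P N \<Omega>"
  define S where "S = {cheeger_ratio M P N E | E. cluster_in M P N \<Omega> E}"
  have S: "S \<noteq> {}" "bdd_below S"
    using assms unfolding S_def admissible_def by (auto intro!: bdd_belowI[of _ 0] cheeger_ratio_nonneg)
  have "\<exists>E. cluster_in M P N \<Omega> E \<and> cheeger_ratio M P N E < h + 1 / real (Suc k)" for k
    using cInf_less_iff[OF S, of "h + 1 / real (Suc k)"]
    unfolding h_def cheeger_const_def S_def by auto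
  then obtain Es where Es: "\<And>k. cluster_in M P N \<Omega> (Es k)"
    and less: "\<And>k. cheeger_ratio M P N (Es k) < h + 1 / real (Suc k)" by metis
  have upper: "(\<lambda>k. h + 1 / real (Suc k)) \<longlonglongrightarrow> h"
    using tendsto_add[OF tendsto_const LIMSEQ_inverse_real_of_nat, of h]
    by (simp add: inverse_eq_divide)
  have "(\<lambda>k. cheeger_ratio M P N (Es k)) \<longlonglongrightarrow> h"
  proof (rule tendsto_sandwich[OF always_eventually always_eventually tendsto_const upper])
    show "\<forall>k. h \<le> cheeger_ratio M P N (Es k)" using cheeger_const_le[OF Es] unfolding h_def by blast
    show "\<forall>k. cheeger_ratio M P N (Es k) \<le> h + 1 / real (Suc k)" using less by (simp add: less_imp_le)
  qed
  moreover have "cheeger_ratio M P N (Es k) \<le> h + 1" for k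
  proof -
    have "1 / real (Suc k) \<le> 1" by simp
    with less[of k] show ?thesis by linarith
  qed
  ultimately show ?thesis using Es that unfolding h_def by blast
qed

lemma perimeter_le_of_cheeger_ratio_le:
  assumes "cluster_in M P N \<Omega> E" "i \<in> {1..N}" "cheeger_ratio M P N E \<le> C"
    and \<Omega>: "\<Omega> \<in> sets M" "emeasure M \<Omega> < \<infinity>"
  shows "P (E i) \<le> ennreal (C * measure M \<Omega>)"
proof -
  have E: "E i \<in> sets M" "0 < emeasure M (E i)" "emeasure M (E i) < \<infinity>" "P (E i) < \<infinity>"
      "ae_subset M (E i) \<Omega>"
    using assms(1,2) unfolding cluster_in_def is_cluster_def by auto
  have mpos: "measure M (E i) > 0" using E(2,3) by (simp add: measure_def enn2real_positive_iff)
  have "measure M (E i) \<le> measure M \<Omega>"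
    using ae_subset_emeasure_le[OF E(5) E(1) \<Omega>(1)] \<Omega>(2) by (simp add: measure_def enn2real_mono)
  moreover have "enn2real (P (E i)) \<le> C * measure M (E i)"
    using order_trans[OF cheeger_ratio_chamber_le[OF assms(2)] assms(3)] mpos by (simp add: divide_le_eq)
  moreover have "0 \<le> C" using order_trans[OF cheeger_ratio_nonneg assms(3)] .
  ultimately have "enn2real (P (E i)) \<le> C * measure M \<Omega>"
    by (meson mult_left_mono order_trans)
  hence "ennreal (enn2real (P (E i))) \<le> ennreal (C * measure M \<Omega>)" by (rule ennreal_leI)
  thus ?thesis using E(4) by simp
qed

lemma chamber_measure_lower_bound:
  assumes "perimeter_small_sets M P"
    and clusters: "\<And>k. is_cluster M P N (Es k)" and bounded: "\<And>k. cheeger_ratio M P N (Es k) \<le> C"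
  obtains e where "e > 0" "\<And>k i. i \<in> {1..N} \<Longrightarrow> e \<le> measure M (Es k i)"
proof -
  obtain e where "e > 0" and small: "\<And>E. E \<in> sets M \<Longrightarrow> 0 < emeasure M E \<Longrightarrow>
      emeasure M E < \<infinity> \<Longrightarrow> P E < \<infinity> \<Longrightarrow> enn2real (P E) / measure M E \<le> C \<Longrightarrow> e < measure M E"
    using perimeter_small_sets_measure_lower_bound[OF assms(1)] by blast
  have "e \<le> measure M (Es k i)" if i: "i \<in> {1..N}" for k i
  proof -
    have "enn2real (P (Es k i)) / measure M (Es k i) \<le> C"
      using order_trans[OF cheeger_ratio_chamber_le[OF i] bounded] .
    moreover have "Es k i \<in> sets M" "0 < emeasure M (Es k i)" "emeasure M (Es k i) < \<infinity>"
      "P (Es k i) < \<infinity>"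
      using clusters[of k] i unfolding is_cluster_def by auto
    ultimately show ?thesis using small less_imp_le by blast
  qed
  with \<open>e > 0\<close> show ?thesis by (rule that)
qed

lemma bounded_clusters_convergent_subseq:
  fixes Es :: "nat \<Rightarrow> nat \<Rightarrow> 'a set"
  assumes "perimeter_compact M P" "\<Omega> \<in> sets M" "emeasure M \<Omega> < \<infinity>"
    and clusters: "\<And>k. cluster_in M P N \<Omega> (Es k)" and bounded: "\<And>k. cheeger_ratio M P N (Es k) \<le> C"
  obtains r E p where "strict_mono r"
    "\<And>i. i \<in> {1..N} \<Longrightarrow> L1_conv_sets M (\<lambda>k. Es (r k) i) (E i)"
    "\<And>i. i \<in> {1..N} \<Longrightarrow> P (E i) < \<infinity>"
    "\<And>i. i \<in> {1..N} \<Longrightarrow> (\<lambda>k. enn2real (P (Es (r k) i))) \<longlonglongrightarrow> p i"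
proof -
  define c where "c = C * measure M \<Omega>"
  have "0 \<le> C" using order_trans[OF cheeger_ratio_nonneg bounded] .
  hence "c \<ge> 0" unfolding c_def by simp
  have "Es k i \<in> sets M \<and> P (Es k i) \<le> ennreal c" if "i \<in> {1..N}" for k i
    using clusters[of k] that perimeter_le_of_cheeger_ratio_le[OF clusters that bounded assms(2,3)]
    unfolding c_def cluster_in_def is_cluster_def by blast
  from perimeter_compact_common_subseq[where F = Es and n = N, OF assms(1) \<open>c \<ge> 0\<close> this]
  obtain r E p where "strict_mono r" and lim: "\<forall>i\<in>{1..N}. E i \<in> sets M \<and>
      P (E i) \<le> ennreal c \<and> L1_conv_sets M (\<lambda>k. Es (r k) i) (E i) \<and>
      (\<lambda>k. enn2real (P (Es (r k) i))) \<longlonglongrightarrow> p i"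
    by blast
  moreover have "P (E i) < \<infinity>" if "i \<in> {1..N}" for i
    using lim that by (metis ennreal_less_top infinity_ennreal_def le_less_trans)
  ultimately show ?thesis using that by blast
qed

lemma cluster_in_limit:
  assumes clusters: "\<And>k. cluster_in M P N \<Omega> (G k)" and \<Omega>: "\<Omega> \<in> sets M" "emeasure M \<Omega> < \<infinity>"
    and conv: "\<And>i. i \<in> {1..N} \<Longrightarrow> L1_conv_sets M (\<lambda>k. G k i) (E i)"
    and finite_perimeter: "\<And>i. i \<in> {1..N} \<Longrightarrow> P (E i) < \<infinity>"
    and "e > 0" and large: "\<And>k i. i \<in> {1..N} \<Longrightarrow> e \<le> measure M (G k i)"
  shows "cluster_in M P N \<Omega> E"
proof -
  have G: "G k i \<in> sets M \<and> 0 < emeasure M (G k i) \<and> emeasure M (G k i) < \<infinity> \<and>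
      ae_subset M (G k i) \<Omega>" if "i \<in> {1..N}" for k i
    using clusters[of k] that unfolding cluster_in_def is_cluster_def by auto
  have inside: "ae_subset M (E i) \<Omega>" if "i \<in> {1..N}" for i
    using L1_conv_sets_ae_subset[OF conv[OF that] \<Omega>(1)] G[OF that] by blast
  have E: "E i \<in> sets M \<and> emeasure M (E i) < \<infinity>" if "i \<in> {1..N}" for i
    using conv[OF that] ae_subset_emeasure_le[OF inside[OF that] _ \<Omega>(1)] \<Omega>(2)
    unfolding L1_conv_sets_def by (auto intro: le_less_trans)
  have "e \<le> measure M (E i)" if "i \<in> {1..N}" for i
    using large[OF that] G[OF that] E[OF that]
    by (intro LIMSEQ_le_const[OF L1_conv_sets_measure_tendsto[OF conv[OF that]]]) auto
  hence "0 < emeasure M (E i)" if "i \<in> {1..N}" for i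
    using that E \<open>e > 0\<close> by (fastforce simp: emeasure_eq_ennreal_measure)
  moreover have "emeasure M (E i \<inter> E j) = 0" if "i \<in> {1..N}" "j \<in> {1..N}" "i \<noteq> j" for i j
    using clusters that unfolding cluster_in_def is_cluster_def
    by (intro L1_conv_sets_null_inter[OF conv conv]) auto
  ultimately show ?thesis
    using E finite_perimeter inside unfolding cluster_in_def is_cluster_def by blast
qed

lemma cheeger_ratio_lsc:
  assumes lsc: "perimeter_lsc M P"
    and clusters: "\<And>k. is_cluster M P N (G k)" and E: "is_cluster M P N E"
    and conv: "\<And>i. i \<in> {1..N} \<Longrightarrow> L1_conv_sets M (\<lambda>k. G k i) (E i)"
    and perimeters: "\<And>i. i \<in> {1..N} \<Longrightarrow> (\<lambda>k. enn2real (P (G k i))) \<longlonglongrightarrow> p i"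
    and ratios: "(\<lambda>k. cheeger_ratio M P N (G k)) \<longlonglongrightarrow> h"
  shows "cheeger_ratio M P N E \<le> h"
proof -
  have G: "0 < emeasure M (G k i) \<and> emeasure M (G k i) < \<infinity> \<and> P (G k i) < \<infinity>"
    if "i \<in> {1..N}" for k i
    using clusters[of k] that unfolding is_cluster_def by auto
  have Ei: "0 < measure M (E i)" "emeasure M (E i) < \<infinity>" if "i \<in> {1..N}" for i
    using E that unfolding is_cluster_def
    by (auto simp: emeasure_eq_ennreal_measure measure_def enn2real_positive_iff)
  have measures: "(\<lambda>k. measure M (G k i)) \<longlonglongrightarrow> measure M (E i)" if "i \<in> {1..N}" for i
    using L1_conv_sets_measure_tendsto[OF conv[OF that] Ei(2)[OF that]] G[OF that] by blast
  have "(\<lambda>k. cheeger_ratio M P N (G k)) \<longlonglongrightarrow> (\<Sum>i=1..N. p i / measure M (E i))"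
    unfolding cheeger_ratio_def
    by (intro tendsto_sum tendsto_divide perimeters measures) (use Ei(1) in fastforce)+
  hence h: "h = (\<Sum>i=1..N. p i / measure M (E i))" using LIMSEQ_unique[OF ratios] by blast
  have "enn2real (P (E i)) \<le> p i" if i: "i \<in> {1..N}" for i
  proof -
    have "(\<lambda>k. ennreal (enn2real (P (G k i)))) \<longlonglongrightarrow> ennreal (p i)"
      using perimeters[OF i] by (rule tendsto_ennrealI)
    hence "(\<lambda>k. P (G k i)) \<longlonglongrightarrow> ennreal (p i)" using G[OF i] by (simp add: less_top)
    hence "P (E i) \<le> ennreal (p i)"
      using lsc conv[OF i] lim_imp_Liminf[OF trivial_limit_sequentially] unfolding perimeter_lsc_def
      by metis
    moreover have "p i \<ge> 0"
      using perimeters[OF i] by (intro LIMSEQ_le_const[of "\<lambda>k. enn2real (P (G k i))"]) auto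
    ultimately show ?thesis by (intro enn2real_leI)
  qed
  thus ?thesis unfolding h cheeger_ratio_def using Ei by (intro sum_mono divide_right_mono) auto
qed

theorem theorem3p1:
  fixes M :: "'a measure" and P :: "'a set \<Rightarrow> ennreal" and N :: nat and \<Omega> :: "'a set"
  assumes "sigma_finite_measure M"
    and "\<exists>A\<in>sets M. P A < \<infinity>"
    and "perimeter_lsc M P"
    and "perimeter_compact M P"
    and "perimeter_small_sets M P"
    and "N \<ge> 1"
    and "\<Omega> \<in> sets M"
    and "0 < emeasure M \<Omega>" and "emeasure M \<Omega> < \<infinity>"
    and "admissible M P N \<Omega>"
  shows "cheeger_sets M P N \<Omega> \<noteq> {}"
proof -
  define h where "h = cheeger_const M P N \<Omega>"
  obtain Es where Es: "\<And>k. cluster_in M P N \<Omega> (Es k)" and bounded: "\<And>k. cheeger_ratio M P N (Es k) \<le> h + 1"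
    and minimizing: "(\<lambda>k. cheeger_ratio M P N (Es k)) \<longlonglongrightarrow> h"
    using cheeger_minimizing_sequence[OF assms(10)] unfolding h_def by blast
  have clusters: "\<And>k. is_cluster M P N (Es k)" using Es unfolding cluster_in_def by blast
  obtain e where "e > 0" and large: "\<And>k i. i \<in> {1..N} \<Longrightarrow> e \<le> measure M (Es k i)"
    using chamber_measure_lower_bound[where Es = Es, OF assms(5) clusters bounded] by blast
  obtain r E p where r: "strict_mono r" and conv: "\<And>i. i \<in> {1..N} \<Longrightarrow> L1_conv_sets M (\<lambda>k. Es (r k) i) (E i)"
    and finite_perimeter: "\<And>i. i \<in> {1..N} \<Longrightarrow> P (E i) < \<infinity>"
    and perimeters: "\<And>i. i \<in> {1..N} \<Longrightarrow> (\<lambda>k. enn2real (P (Es (r k) i))) \<longlonglongrightarrow> p i"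
    using bounded_clusters_convergent_subseq[where Es = Es, OF assms(4,7,9) Es bounded] by blast
  have cluster: "cluster_in M P N \<Omega> E"
    by (rule cluster_in_limit[where G = "\<lambda>k. Es (r k)", OF Es assms(7,9) conv finite_perimeter
          \<open>e > 0\<close> large])
  have "cheeger_ratio M P N E \<le> h"
  proof (rule cheeger_ratio_lsc[where G = "\<lambda>k. Es (r k)", OF assms(3) _ _ conv perimeters])
    show "is_cluster M P N (Es (r k))" for k by (rule clusters)
    show "is_cluster M P N E" using cluster unfolding cluster_in_def by blast
    show "(\<lambda>k. cheeger_ratio M P N (Es (r k))) \<longlonglongrightarrow> h"
      using LIMSEQ_subseq_LIMSEQ[OF minimizing r] by (simp add: o_def)
  qed
  hence "E \<in> cheeger_sets M P N \<Omega>"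
    using cheeger_const_le[OF cluster] cluster unfolding cheeger_sets_def h_def by simp
  thus ?thesis by blast
qed

end
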